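(* Let $q=p^h$ with $p$ an odd prime, and let $a,b,c\in{\rm GF}(q)$ be such that the polynomial $X^3+aX^2+bX+c$ is irreducible over ${\rm GF}(q)$. For $r,s,t\in{\rm GF}(q)$ let $$M_{r,s,t}=\begin{pmatrix}1&0&r&r^2-ar+s&t\\0&1&s&2rs-t&s^2+bs-cr\\0&0&1&2r&2s\\0&0&0&1&0\\0&0&0&0&1\end{pmatrix}.$$ Then $G=\{M_{r,s,t} : r,s,t\in{\rm GF}(q)\}$ is a group (under matrix multiplication) which is a $p$-group of order $q^3$. *)

theory Defs
  imports "HOL-Analysis.Analysis" "HOL-Computational_Algebra.Polynomial" "HOL-Algebra.Group"
begin

definition Mrst :: "'a::field \<Rightarrow> 'a \<Rightarrow> 'a \<Rightarrow> 'a \<Rightarrow> 'a \<Rightarrow> 'a \<Rightarrow> 'a^5^5" where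
  "Mrst a b c r s t = vector [
     vector [1, 0, r, r^2 - a * r + s, t],
     vector [0, 1, s, 2 * r * s - t, s^2 + b * s - c * r],
     vector [0, 0, 1, 2 * r, 2 * s ],
     vector [0, 0, 0, 1, 0],
     vector [0, 0, 0, 0, 1]]"

definition Gset :: "'a::field \<Rightarrow> 'a \<Rightarrow> 'a \<Rightarrow> ('a^5^5) set" where
  "Gset a b c = {Mrst a b c r s t | r s t. True}"

definition matgrp :: "('a::semiring_1^'n^'n) set \<Rightarrow> ('a^'n^'n) monoid" where
  "matgrp S = \<lparr>carrier = S, mult = (\<lambda>A B. A ** B), one = mat 1\<rparr>"

end

theory Submission
  imports Defs
begin

text \<open>Multiplying out gives M(r,s,t) M(r',s',t') = M(r+r', s+s', t+t'+2rs'), a Heisenberg-type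
  law on triples. Hence G contains M(0,0,0) = 1, is closed under products and inverses, and
  (r,s,t) \<mapsto> M(r,s,t) is a bijection from GF(q)^3 onto G, so |G| = q^3 = p^(3h).\<close>

lemma exhaust_5:
  fixes x :: 5
  shows "x = 1 \<or> x = 2 \<or> x = 3 \<or> x = 4 \<or> x = 5"
proof (induct x)
  case (of_int z)
  then have "z = 0 \<or> z = 1 \<or> z = 2 \<or> z = 3 \<or> z = 4" by fastforce
  then show ?case by auto
qed

lemma forall_5: "(\<forall>i::5. P i) \<longleftrightarrow> P 1 \<and> P 2 \<and> P 3 \<and> P 4 \<and> P 5"
  by (metis exhaust_5)

lemma UNIV_5: "UNIV = {1, 2, 3, 4, 5::5}"
  using exhaust_5 by auto

lemma sum_5: "sum f (UNIV::5 set) = f 1 + f 2 + f 3 + f 4 + f 5"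
  unfolding UNIV_5 by (simp add: ac_simps)

lemma vector_5 [simp]:
  "(vector [x1,x2,x3,x4,x5] :: ('a::zero)^5)$1 = x1"
  "(vector [x1,x2,x3,x4,x5] :: ('a::zero)^5)$2 = x2"
  "(vector [x1,x2,x3,x4,x5] :: ('a::zero)^5)$3 = x3"
  "(vector [x1,x2,x3,x4,x5] :: ('a::zero)^5)$4 = x4"
  "(vector [x1,x2,x3,x4,x5] :: ('a::zero)^5)$5 = x5"
  unfolding vector_def by simp_all

lemma group_matgrpI:
  fixes S :: "('a::semiring_1^'n^'n) set"
  assumes one: "mat 1 \<in> S"
    and mult_closed: "\<And>A B. A \<in> S \<Longrightarrow> B \<in> S \<Longrightarrow> A ** B \<in> S"
    and left_inverse: "\<And>A. A \<in> S \<Longrightarrow> \<exists>B\<in>S. B ** A = mat 1"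
  shows "group (matgrp S)"
  by (rule groupI) (auto simp: matgrp_def one mult_closed left_inverse matrix_mul_assoc)

lemma Mrst_mult:
  "Mrst a b c r s t ** Mrst a b c r' s' t' = Mrst a b c (r + r') (s + s') (t + t' + 2 * r * s')"
  unfolding matrix_matrix_mult_def vec_eq_iff forall_5
  by (simp add: Mrst_def sum_5 algebra_simps power2_eq_square)

lemma Mrst_zero: "Mrst a b c 0 0 0 = mat 1"
  unfolding vec_eq_iff mat_def forall_5 by (simp add: Mrst_def)

lemma Mrst_left_inverse: "Mrst a b c (- r) (- s) (2 * r * s - t) ** Mrst a b c r s t = mat 1"
  by (simp add: Mrst_mult algebra_simps Mrst_zero)

lemma Mrst_inject: "Mrst a b c r s t = Mrst a b c r' s' t' \<longleftrightarrow> r = r' \<and> s = s' \<and> t = t'"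
  unfolding vec_eq_iff Mrst_def by (metis vector_5)

lemma Gset_eq_image: "Gset a b c = (\<lambda>(r, s, t). Mrst a b c r s t) ` UNIV"
  unfolding Gset_def by (auto simp: image_iff) (metis case_prod_conv)

lemma card_Gset: "card (Gset (a::'a::{field,finite}) b c) = CARD('a) ^ 3"
proof -
  have "inj (\<lambda>(r, s, t). Mrst a b c r s t)"
    by (auto simp: inj_def Mrst_inject)
  then show ?thesis
    by (simp add: Gset_eq_image card_image card_cartesian_product power3_eq_cube)
qed

lemma group_Gset: "group (matgrp (Gset a b c))"
proof (rule group_matgrpI)
  show "mat 1 \<in> Gset a b c"
    unfolding Gset_def by (metis (mono_tags) Mrst_zero mem_Collect_eq)
  show "A ** B \<in> Gset a b c" if "A \<in> Gset a b c" "B \<in> Gset a b c" for A B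
    using that unfolding Gset_def by (auto simp: Mrst_mult) blast
  show "\<exists>B\<in>Gset a b c. B ** A = mat 1" if "A \<in> Gset a b c" for A
    using that unfolding Gset_def by (auto intro: Mrst_left_inverse)
qed

theorem lemma2p1:
  fixes a b c :: "'a::{field,finite}" and p h :: nat
  assumes "prime p" and "odd p" and "CARD('a) = p ^ h"
    and "irreducible [:c, b, a, 1:]"
  shows "group (matgrp (Gset a b c))
         \<and> card (carrier (matgrp (Gset a b c))) = (p ^ h) ^ 3
         \<and> (\<exists>n. card (carrier (matgrp (Gset a b c))) = p ^ n)"
proof -
  have "card (carrier (matgrp (Gset a b c))) = (p ^ h) ^ 3"
    using card_Gset[of a b c] assms(3) by (simp add: matgrp_def)
  then show ?thesis
    using group_Gset[of a b c] by (metis power_mult)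
qed

end
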